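(* Let $n\ge1$ and let $\mathcal{S}\subseteq\mathbb{R}_{++}$ be a finite set. A function $g:\overline{\mathcal{S}}^n\to[0,1]$ belongs to $\mathcal{G}_n(\mathcal{S})$ if and only if there exists $G\in\mathcal{G}_n(\mathbb{R}_{++})$ such that $g$ is the restriction of $G$ to $\overline{\mathcal{S}}^n$.
   Context: For $D\subseteq\mathbb{R}$ put $\overline{D}=D\cup\{0\}\cup\{\infty\}$ (so $\overline{\mathbb{R}_{++}}=[0,\infty]$). For $\mathbf{x}\le\mathbf{y}$ (coordinatewise) let $V_{xy}=\{x_1,y_1\}\times\cdots\times\{x_n,y_n\}$, and for $\mathbf{b}\in V_{xy}$ let $\mathrm{sgn}(\mathbf{b})=1$ if $b_i=x_i$ for an even number of indices $i$ and $-1$ otherwise. A function $G$ is $n$-increasing on $\overline{D}^n$ if $\sum_{\mathbf{b}\in V_{xy}}\mathrm{sgn}(\mathbf{b})G(\mathbf{b})\ge0$ for all $\mathbf{x}\le\mathbf{y}$ in $\overline{D}^n$. For $\mathcal{S}\subseteq\mathbb{R}_{++}$, $\mathcal{G}_n(\mathcal{S})$ is the set of functions $G:\overline{\mathcal{S}}^n\to[0,1]$ that are right continuous on $\overline{\mathcal{S}}^n$, $n$-increasing on $\overline{\mathcal{S}}^n$, satisfy $G(\mathbf{z})=0$ whenever at least one $z_i=0$, and satisfy $G(\infty,\dots,\infty)=1$. *)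

theory Defs
  imports "HOL-Analysis.Analysis" "HOL-Library.Extended_Real"
begin

text \<open>Points of [0,\<infinity>]^n are represented as functions nat \<Rightarrow> ereal that are
  extensional on {..<n} (value undefined outside), i.e. elements of PiE.\<close>

definition Dbar :: "real set \<Rightarrow> ereal set" where
  "Dbar D = ereal ` D \<union> {0, \<infinity>}"

definition dom_n :: "nat \<Rightarrow> real set \<Rightarrow> (nat \<Rightarrow> ereal) set" where
  "dom_n n D = PiE {..<n} (\<lambda>_. Dbar D)"

definition vertex :: "nat \<Rightarrow> nat set \<Rightarrow> (nat \<Rightarrow> ereal) \<Rightarrow> (nat \<Rightarrow> ereal) \<Rightarrow> (nat \<Rightarrow> ereal)" where
  "vertex n T x y = (\<lambda>i\<in>{..<n}. if i \<in> T then x i else y i)"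

definition n_increasing_on :: "nat \<Rightarrow> real set \<Rightarrow> ((nat \<Rightarrow> ereal) \<Rightarrow> real) \<Rightarrow> bool" where
  "n_increasing_on n D G \<longleftrightarrow>
     (\<forall>x\<in>dom_n n D. \<forall>y\<in>dom_n n D. (\<forall>i<n. x i \<le> y i) \<longrightarrow>
        (\<Sum>T\<in>Pow {..<n}. (-1) ^ card T * G (vertex n T x y)) \<ge> 0)"

definition right_continuous_on :: "nat \<Rightarrow> real set \<Rightarrow> ((nat \<Rightarrow> ereal) \<Rightarrow> real) \<Rightarrow> bool" where
  "right_continuous_on n D G \<longleftrightarrow>
     (\<forall>x\<in>dom_n n D. (G \<longlongrightarrow> G x)
        (at x within {y \<in> dom_n n D. \<forall>i<n. x i \<le> y i}))"

definition Gn :: "nat \<Rightarrow> real set \<Rightarrow> ((nat \<Rightarrow> ereal) \<Rightarrow> real) set" where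
  "Gn n D = {G. (\<forall>x\<in>dom_n n D. 0 \<le> G x \<and> G x \<le> 1)
              \<and> right_continuous_on n D G
              \<and> n_increasing_on n D G
              \<and> (\<forall>x\<in>dom_n n D. (\<exists>i<n. x i = 0) \<longrightarrow> G x = 0)
              \<and> G (\<lambda>i\<in>{..<n}. \<infinity>) = 1}"

end

theory Submission
  imports Defs
begin

text \<open>Extend g from the finite grid to [0,\<infinity>]^n by G x = g \<lfloor>x\<rfloor>, where \<lfloor>x\<rfloor> rounds
  every coordinate down to the largest grid value below it. Rounding down is monotone and
  commutes with taking vertices of a box, so G is n-increasing; it is locally constant to
  the right of every point, so G is right continuous; and it fixes 0, \<infinity> and the grid,
  so G restricts to g. Conversely, restricting any G to the grid keeps every defining
  property, right continuity being automatic on a finite set.\<close>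

definition floor_in :: "ereal set \<Rightarrow> ereal \<Rightarrow> ereal" where
  "floor_in F t = Max {s \<in> F. s \<le> t}"

lemma
  assumes "finite F" "s \<in> F" "s \<le> t"
  shows floor_in_mem: "floor_in F t \<in> F"
    and floor_in_le: "floor_in F t \<le> t"
    and le_floor_in: "s \<le> floor_in F t"
proof -
  have fin: "finite {s \<in> F. s \<le> t}" and ne: "{s \<in> F. s \<le> t} \<noteq> {}"
    using assms by auto
  show "floor_in F t \<in> F" "floor_in F t \<le> t"
    using Max_in[OF fin ne] unfolding floor_in_def by auto
  show "s \<le> floor_in F t"
    using Max_ge[OF fin] assms unfolding floor_in_def by simp
qed

lemma floor_in_id: "finite F \<Longrightarrow> t \<in> F \<Longrightarrow> floor_in F t = t"
  by (intro antisym floor_in_le le_floor_in) auto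

lemma floor_in_mono:
  assumes "finite F" "s \<in> F" "s \<le> a" "a \<le> b"
  shows "floor_in F a \<le> floor_in F b"
proof (rule le_floor_in[OF assms(1)])
  show "floor_in F a \<in> F"
    using floor_in_mem[OF assms(1-3)] .
  show "floor_in F a \<le> b"
    using floor_in_le[OF assms(1-3)] assms(4) by simp
qed

lemma floor_in_locally_const_right:
  assumes "finite F" "s \<in> F" "s \<le> t" "u \<in> F" "t < u"
  obtains m where "t < m" "\<And>v. t \<le> v \<Longrightarrow> v < m \<Longrightarrow> floor_in F v = floor_in F t"
proof
  let ?m = "Min {u \<in> F. t < u}"
  have fin: "finite {u \<in> F. t < u}" and ne: "{u \<in> F. t < u} \<noteq> {}"
    using assms by auto
  show "t < ?m"
    using Min_in[OF fin ne] by simp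
  fix v assume v: "t \<le> v" "v < ?m"
  have s_v: "s \<le> v" using assms(3) v(1) by simp
  have "floor_in F v \<le> t"
  proof (rule ccontr)
    assume "\<not> floor_in F v \<le> t"
    then have "?m \<le> floor_in F v"
      using Min_le[OF fin] floor_in_mem[OF assms(1,2) s_v] by simp
    then show False
      using floor_in_le[OF assms(1,2) s_v] v(2) by simp
  qed
  then have "floor_in F v \<le> floor_in F t"
    using le_floor_in[OF assms(1) floor_in_mem[OF assms(1,2) s_v]] by simp
  then show "floor_in F v = floor_in F t"
    using floor_in_mono[OF assms(1,2,3) v(1)] by simp
qed

lemma Dbar_finite: "finite S \<Longrightarrow> finite (Dbar S)"
  unfolding Dbar_def by simp

lemma zero_in_Dbar: "0 \<in> Dbar S" and infinity_in_Dbar: "\<infinity> \<in> Dbar S"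
  unfolding Dbar_def by simp_all

lemma dom_n_mono: "S \<subseteq> D \<Longrightarrow> dom_n n S \<subseteq> dom_n n D"
  unfolding dom_n_def Dbar_def by (rule PiE_mono) auto

lemma dom_n_nonneg: "x \<in> dom_n n {0<..} \<Longrightarrow> i < n \<Longrightarrow> 0 \<le> x i"
  unfolding dom_n_def Dbar_def by (force simp: PiE_iff)

lemma dom_n_finite: "finite S \<Longrightarrow> finite (dom_n n S)"
  unfolding dom_n_def using Dbar_finite by (intro finite_PiE) auto

lemma vertex_in_dom_n: "x \<in> dom_n n D \<Longrightarrow> y \<in> dom_n n D \<Longrightarrow> vertex n T x y \<in> dom_n n D"
  unfolding dom_n_def vertex_def by (auto simp: PiE_iff)

lemma top_in_dom_n: "(\<lambda>i\<in>{..<n}. \<infinity>) \<in> dom_n n D"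
  unfolding dom_n_def by (simp add: infinity_in_Dbar)

lemma tendsto_apply_at_within: "((\<lambda>z. z i) \<longlongrightarrow> x i) (at x within A)"
proof (rule tendsto_within_subset)
  show "((\<lambda>z. z i) \<longlongrightarrow> x i) (at x)"
    using continuous_on_product_coordinates[of i] unfolding continuous_on_def by auto
qed simp

definition floor_vec :: "nat \<Rightarrow> real set \<Rightarrow> (nat \<Rightarrow> ereal) \<Rightarrow> (nat \<Rightarrow> ereal)" where
  "floor_vec n S x = (\<lambda>i\<in>{..<n}. floor_in (Dbar S) (x i))"

lemma floor_vec_in_dom_n:
  "finite S \<Longrightarrow> x \<in> dom_n n {0<..} \<Longrightarrow> floor_vec n S x \<in> dom_n n S"
  using floor_in_mem[OF Dbar_finite zero_in_Dbar dom_n_nonneg]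
  unfolding floor_vec_def dom_n_def by (auto simp: PiE_iff)

lemma floor_vec_id: "finite S \<Longrightarrow> x \<in> dom_n n S \<Longrightarrow> floor_vec n S x = x"
  unfolding floor_vec_def dom_n_def
  by (auto simp: PiE_iff extensional_def floor_in_id Dbar_finite)

lemma floor_vec_vertex:
  "floor_vec n S (vertex n T x y) = vertex n T (floor_vec n S x) (floor_vec n S y)"
  unfolding floor_vec_def vertex_def by auto

lemma floor_vec_mono:
  assumes "finite S" "x \<in> dom_n n {0<..}" "\<forall>i<n. x i \<le> y i"
  shows "\<forall>i<n. floor_vec n S x i \<le> floor_vec n S y i"
  using floor_in_mono[OF Dbar_finite[OF assms(1)] zero_in_Dbar dom_n_nonneg[OF assms(2)]] assms(3)
  unfolding floor_vec_def by auto

lemma floor_vec_eventually_const_right: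
  assumes "finite S" "x \<in> dom_n n {0<..}"
  shows "eventually (\<lambda>y. floor_vec n S y = floor_vec n S x)
           (at x within {y \<in> dom_n n {0<..}. \<forall>i<n. x i \<le> y i})"
    (is "eventually _ (at x within ?A)")
proof -
  let ?fl = "floor_in (Dbar S)"
  have in_A: "eventually (\<lambda>y. y \<in> ?A) (at x within ?A)"
    by (simp add: eventually_at_filter)
  have "eventually (\<lambda>y. ?fl (y i) = ?fl (x i)) (at x within ?A)" if i: "i < n" for i
  proof (cases "x i = \<infinity>")
    case True
    then have same: "y i = x i" if "y \<in> ?A" for y
      using that i by auto
    from in_A show ?thesis
      by eventually_elim (simp add: same)
  next
    case False
    then have "x i < \<infinity>"
      by (cases "x i") auto
    then obtain m where m: "x i < m" "\<And>v. x i \<le> v \<Longrightarrow> v < m \<Longrightarrow> ?fl v = ?fl (x i)"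
      using floor_in_locally_const_right[OF Dbar_finite[OF assms(1)] zero_in_Dbar
          dom_n_nonneg[OF assms(2) i] infinity_in_Dbar] by blast
    have "eventually (\<lambda>y. y i < m) (at x within ?A)"
      using order_tendstoD(2)[OF tendsto_apply_at_within[of i x] m(1)] .
    with in_A show ?thesis
    proof eventually_elim
      case (elim y)
      then show ?case
        using m(2) i by simp
    qed
  qed
  then have "eventually (\<lambda>y. \<forall>i\<in>{..<n}. ?fl (y i) = ?fl (x i)) (at x within ?A)"
    by (intro eventually_ball_finite) auto
  then show ?thesis
    by eventually_elim (simp add: floor_vec_def cong: restrict_cong)
qed

lemma Gn_comp_floor_vec:
  assumes "finite S" "g \<in> Gn n S"
  shows "(\<lambda>x. g (floor_vec n S x)) \<in> Gn n {0<..}"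
proof -
  let ?G = "\<lambda>x. g (floor_vec n S x)"
  have g_bounds: "\<forall>x\<in>dom_n n S. 0 \<le> g x \<and> g x \<le> 1"
    and g_incr: "n_increasing_on n S g"
    and g_zero: "\<forall>x\<in>dom_n n S. (\<exists>i<n. x i = 0) \<longrightarrow> g x = 0"
    and g_top: "g (\<lambda>i\<in>{..<n}. \<infinity>) = 1"
    using assms(2) unfolding Gn_def by simp_all
  note floor_in_dom = floor_vec_in_dom_n[OF assms(1)]
  have bounds: "\<forall>x\<in>dom_n n {0<..}. 0 \<le> ?G x \<and> ?G x \<le> 1"
    using g_bounds floor_in_dom by simp
  have rc: "right_continuous_on n {0<..} ?G"
    unfolding right_continuous_on_def
  proof
    fix x assume "x \<in> dom_n n {0<..}"
    from floor_vec_eventually_const_right[OF assms(1) this]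
    have "eventually (\<lambda>y. ?G y = ?G x) (at x within {y \<in> dom_n n {0<..}. \<forall>i<n. x i \<le> y i})"
      by eventually_elim simp
    then show "(?G \<longlongrightarrow> ?G x) (at x within {y \<in> dom_n n {0<..}. \<forall>i<n. x i \<le> y i})"
      by (rule tendsto_eventually)
  qed
  have incr: "n_increasing_on n {0<..} ?G"
    unfolding n_increasing_on_def
  proof (intro ballI impI)
    fix x y assume x: "x \<in> dom_n n {0<..}" and y: "y \<in> dom_n n {0<..}"
      and le: "\<forall>i<n. x i \<le> y i"
    show "(\<Sum>T\<in>Pow {..<n}. (-1) ^ card T * ?G (vertex n T x y)) \<ge> 0"
      using g_incr floor_in_dom[OF x] floor_in_dom[OF y] floor_vec_mono[OF assms(1) x le]
      unfolding n_increasing_on_def floor_vec_vertex by blast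
  qed
  have zero: "\<forall>x\<in>dom_n n {0<..}. (\<exists>i<n. x i = 0) \<longrightarrow> ?G x = 0"
  proof (intro ballI impI)
    fix x assume x: "x \<in> dom_n n {0<..}" and "\<exists>i<n. x i = 0"
    then obtain i where i: "i < n" "x i = 0" by blast
    then have "floor_vec n S x i = 0"
      by (simp add: floor_vec_def floor_in_id Dbar_finite[OF assms(1)] zero_in_Dbar)
    then show "?G x = 0"
      using g_zero floor_in_dom[OF x] i(1) by blast
  qed
  have top: "?G (\<lambda>i\<in>{..<n}. \<infinity>) = 1"
    using g_top floor_vec_id[OF assms(1) top_in_dom_n] by simp
  show ?thesis
    unfolding Gn_def using bounds rc incr zero top by simp
qed

lemma tendsto_at_within_finite:
  fixes x :: "'i \<Rightarrow> 'a::t1_space"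
  assumes "finite A"
  shows "(f \<longlongrightarrow> f x) (at x within A)"
proof -
  have "eventually (\<lambda>z. z \<noteq> y) (at x within A)" if "y \<noteq> x" for y
  proof -
    obtain i where "x i \<noteq> y i" using \<open>y \<noteq> x\<close> by (metis ext)
    then have "eventually (\<lambda>z. z i \<noteq> y i) (at x within A)"
      by (rule tendsto_imp_eventually_ne[OF tendsto_apply_at_within])
    then show ?thesis by eventually_elim auto
  qed
  then have "eventually (\<lambda>z. \<forall>y\<in>A - {x}. z \<noteq> y) (at x within A)"
    using assms by (intro eventually_ball_finite) auto
  moreover have "eventually (\<lambda>z. z \<in> A \<and> z \<noteq> x) (at x within A)"
    unfolding eventually_at_filter by simp
  ultimately have "eventually (\<lambda>z. f z = f x) (at x within A)"
    by eventually_elim blast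
  then show ?thesis by (rule tendsto_eventually)
qed

lemma right_continuous_on_finite: "finite S \<Longrightarrow> right_continuous_on n S g"
  unfolding right_continuous_on_def
  by (intro ballI tendsto_at_within_finite) (simp add: dom_n_finite)

lemma Gn_restrict:
  assumes "finite S" "S \<subseteq> D" "G \<in> Gn n D" "\<forall>x\<in>dom_n n S. g x = G x"
  shows "g \<in> Gn n S"
proof -
  have sub: "dom_n n S \<subseteq> dom_n n D"
    using dom_n_mono[OF assms(2)] .
  have "n_increasing_on n S g"
    unfolding n_increasing_on_def
  proof (intro ballI impI)
    fix x y assume x: "x \<in> dom_n n S" and y: "y \<in> dom_n n S" and "\<forall>i<n. x i \<le> y i"
    then have "(\<Sum>T\<in>Pow {..<n}. (-1) ^ card T * G (vertex n T x y)) \<ge> 0"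
      using assms(3) sub unfolding Gn_def n_increasing_on_def by blast
    then show "(\<Sum>T\<in>Pow {..<n}. (-1) ^ card T * g (vertex n T x y)) \<ge> 0"
      using assms(4) vertex_in_dom_n[OF x y] by simp
  qed
  then show ?thesis
    using assms(3,4) sub right_continuous_on_finite[OF assms(1)] top_in_dom_n[of n S]
    unfolding Gn_def by auto
qed

theorem lemma1:
  fixes n :: nat and S :: "real set" and g :: "(nat \<Rightarrow> ereal) \<Rightarrow> real"
  assumes "n \<ge> 1" and "finite S" and "S \<subseteq> {0<..}"
    and "\<forall>x\<in>dom_n n S. 0 \<le> g x \<and> g x \<le> 1"
  shows "g \<in> Gn n S \<longleftrightarrow>
         (\<exists>G\<in>Gn n {0<..}. \<forall>x\<in>dom_n n S. g x = G x)"
proof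
  assume "g \<in> Gn n S"
  show "\<exists>G\<in>Gn n {0<..}. \<forall>x\<in>dom_n n S. g x = G x"
  proof
    show "(\<lambda>x. g (floor_vec n S x)) \<in> Gn n {0<..}"
      using Gn_comp_floor_vec[OF assms(2) \<open>g \<in> Gn n S\<close>] .
    show "\<forall>x\<in>dom_n n S. g x = g (floor_vec n S x)"
      using floor_vec_id[OF assms(2)] by simp
  qed
next
  assume "\<exists>G\<in>Gn n {0<..}. \<forall>x\<in>dom_n n S. g x = G x"
  then show "g \<in> Gn n S"
    using Gn_restrict[OF assms(2,3)] by blast
qed

end
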